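(* Let $\beta>1$ be irrational and let $n,m\ge 2$ be integers with $n\neq m$. Then $\mu_{(\beta,n)}\neq\mu_{(\beta,m)}$.
   Context: For a real number $\gamma>1$ let $T_\gamma:[0,1)\to[0,1)$, $T_\gamma(x)=\gamma x \bmod 1$. For real $\beta>1$ and an integer $n\ge 2$, the alternate base transformation $K_{(\beta,n)}:\{0,1\}\times[0,1)\to\{0,1\}\times[0,1)$ is $K_{(\beta,n)}(0,x)=(1,T_\beta(x))$, $K_{(\beta,n)}(1,x)=(0,T_n(x))$. For reals $\gamma_1,\gamma_2>1$, $T_{\gamma_1\circ\gamma_2}:=T_{\gamma_1}\circ T_{\gamma_2}$ (a piecewise linear map of constant slope $\gamma_1\gamma_2$), and $\mu_{\gamma_1\circ\gamma_2}$ denotes its unique invariant probability measure absolutely continuous with respect to Lebesgue measure. The absolutely continuous invariant probability measure $\mu_{(\beta,n)}$ of $K_{(\beta,n)}$ is given by $\mu_{(\beta,n)}(\{0\}\times A\cup\{1\}\times B)=\tfrac12\mu_{n\circ\beta}(A)+\tfrac12\mu_{\beta\circ n}(B)$ for Borel $A,B\subseteq[0,1)$. *)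

theory Defs
  imports "HOL-Probability.Probability"
begin

definition Tmap :: "real \<Rightarrow> real \<Rightarrow> real" where
  "Tmap \<gamma> x = \<gamma> * x - of_int \<lfloor>\<gamma> * x\<rfloor>"

definition unit_borel :: "real measure" where
  "unit_borel = restrict_space borel {0..<1}"

definition unit_lebesgue :: "real measure" where
  "unit_lebesgue = restrict_space lborel {0..<1}"

definition is_acip :: "(real \<Rightarrow> real) \<Rightarrow> real measure \<Rightarrow> bool" where
  "is_acip f \<mu> \<longleftrightarrow>
     sets \<mu> = sets unit_borel \<and> space \<mu> = {0..<1} \<and>
     prob_space \<mu> \<and>
     absolutely_continuous unit_lebesgue \<mu> \<and>
     f \<in> measurable \<mu> \<mu> \<and> distr \<mu> \<mu> f = \<mu>"

definition mu_comp :: "real \<Rightarrow> real \<Rightarrow> real measure" where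
  "mu_comp \<gamma>1 \<gamma>2 = (THE \<mu>. is_acip (Tmap \<gamma>1 \<circ> Tmap \<gamma>2) \<mu>)"

text \<open>The acip mu_{(beta,n)} of the alternate base transformation K_{(beta,n)} on
  {0,1} x [0,1): mu(S) = 1/2 mu_{n o beta}(S_0) + 1/2 mu_{beta o n}(S_1),
  where S_i is the slice of S at i.\<close>
definition mu_alt :: "real \<Rightarrow> nat \<Rightarrow> (nat \<times> real) measure" where
  "mu_alt \<beta> n = measure_of ({0,1::nat} \<times> {0..<1})
      (sets (count_space {0,1::nat} \<Otimes>\<^sub>M unit_borel))
      (\<lambda>S. ennreal (1/2) * emeasure (mu_comp (real n) \<beta>) {x. (0, x) \<in> S}
          + ennreal (1/2) * emeasure (mu_comp \<beta> (real n)) {x. (1, x) \<in> S})"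

end

theory Submission
  imports Defs
begin

text \<open>For \<open>g > 1\<close> the map \<open>T\<^sub>g\<close> has a unique acip, Parry's measure, whose density is
  proportional to \<open>\<Sum>\<^sub>k g\<^sup>-\<^sup>k 1\<^bsub>[0, T\<^sub>g\<^sup>k 1)\<^esub>\<close>; uniqueness comes from the ergodicity of \<open>T\<^sub>g\<close>
  with respect to Lebesgue measure. Since \<open>T\<^sub>n \<circ> T\<^sub>\<beta> = T\<^bsub>n\<beta>\<^esub>\<close>, the \<open>0\<close>-component of
  \<open>\<mu>\<^bsub>(\<beta>,n)\<^esub>\<close> is half the Parry measure of \<open>n\<beta>\<close> (the acip of \<open>T\<^sub>\<beta> \<circ> T\<^sub>n\<close> is only needed
  to see that \<open>\<mu>\<^bsub>(\<beta>,n)\<^esub>\<close> is a measure on the product \<open>\<sigma>\<close>-algebra). So it suffices to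
  separate the Parry measures of \<open>a = n\<beta>\<close> and \<open>b = m\<beta>\<close> when \<open>a + 1 < b\<close> and \<open>a \<notin> \<int>\<close>,
  which holds as \<open>\<beta>\<close> is irrational. Before normalisation, the density for \<open>a\<close> drops by
  \<open>1 / a\<close> at \<open>frac a\<close>, whereas the density for \<open>b\<close> drops by at most \<open>1 / (b - 1)\<close> anywhere;
  comparing also the densities just below \<open>1\<close> gives \<open>b - 1 \<le> a\<close>.\<close>

section \<open>The maps \<open>T\<^sub>\<gamma>\<close> and Lebesgue measure\<close>

lemma Tmap_eq_frac: "Tmap g x = frac (g * x)"
  by (simp add: Tmap_def frac_def)

lemma Tmap_in_unit: "Tmap g x \<in> {0..<1}"
  by (simp add: Tmap_eq_frac frac_lt_1)

lemma Tmap_nat_Tmap: "Tmap (real n) (Tmap b x) = Tmap (real n * b) x"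
proof -
  have "real n * Tmap b x = real n * b * x + of_int (- int n * \<lfloor>b * x\<rfloor>)"
    by (simp add: Tmap_def algebra_simps)
  then show ?thesis
    by (simp only: Tmap_eq_frac frac_add_of_int_right)
qed

lemma borel_measurable_Tmap [measurable]: "Tmap g \<in> borel_measurable borel"
  unfolding Tmap_def by measurable

lemma emeasure_lborel_affine_preimage:
  assumes "g > 0" "B \<in> sets borel"
  shows "emeasure lborel {x. g * x - c \<in> B} = ennreal (1 / g) * emeasure lborel B"
proof -
  let ?h = "\<lambda>x. c / g + (1 / g) * x"
  have m: "{x::real. g * x - c \<in> B} \<in> sets borel"
    using assms(2) by measurable
  have "emeasure lborel {x. g * x - c \<in> B}
      = emeasure (density (distr lborel borel ?h) (\<lambda>_. ennreal \<bar>1 / g\<bar>)) {x. g * x - c \<in> B}"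
    using lborel_real_affine[of "1 / g" "c / g"] assms(1) by simp
  also have "\<dots> = ennreal (1 / g) * emeasure lborel (?h -` {x. g * x - c \<in> B})"
    using m assms(1) by (simp add: emeasure_density_const emeasure_distr)
  also have "?h -` {x. g * x - c \<in> B} = B"
    using assms(1) by (auto simp: field_simps)
  finally show ?thesis .
qed

text \<open>The preimage of \<open>S \<subseteq> [0, 1)\<close> in \<open>[0, t)\<close> meets \<open>\<lfloor>g t\<rfloor>\<close> full branches of \<open>T\<^sub>g\<close> and
  one partial branch, which ends at \<open>t\<close>; on the \<open>i\<close>-th branch \<open>T\<^sub>g x = g x - i\<close>.\<close>
definition Tmap_branch :: "real \<Rightarrow> real \<Rightarrow> real set \<Rightarrow> nat \<Rightarrow> real set" where
  "Tmap_branch g t S i = {x. g * x - real i \<in> S \<inter> {0..<(if i < nat \<lfloor>g * t\<rfloor> then 1 else Tmap g t)}}"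

lemma floor_Tmap_branch: "S \<subseteq> {0..<1} \<Longrightarrow> x \<in> Tmap_branch g t S i \<Longrightarrow> \<lfloor>g * x\<rfloor> = int i"
  by (auto simp: Tmap_branch_def floor_eq_iff)

lemma Tmap_preimage_Ico_eq_UN:
  assumes g: "g > 0" and S: "S \<subseteq> {0..<1}" and t: "0 \<le> t"
  shows "{x\<in>{0..<t}. Tmap g x \<in> S} = (\<Union>i\<le>nat \<lfloor>g * t\<rfloor>. Tmap_branch g t S i)"
proof (intro set_eqI iffI)
  define N where "N = nat \<lfloor>g * t\<rfloor>"
  have N: "of_int \<lfloor>g * t\<rfloor> = real N"
    using g t by (simp add: N_def)
  fix x
  assume x: "x \<in> {x\<in>{0..<t}. Tmap g x \<in> S}"
  define j where "j = nat \<lfloor>g * x\<rfloor>"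
  have gx: "0 \<le> g * x" "g * x < g * t"
    using x g by auto
  then have j: "of_int \<lfloor>g * x\<rfloor> = real j" "j \<le> N"
    by (auto simp: j_def N_def floor_mono nat_mono)
  then have "Tmap g x = g * x - real j"
    by (simp add: Tmap_def)
  then have "x \<in> Tmap_branch g t S j"
    using x j gx N Tmap_in_unit[of g x] by (auto simp: Tmap_branch_def Tmap_def N_def)
  then show "x \<in> (\<Union>i\<le>nat \<lfloor>g * t\<rfloor>. Tmap_branch g t S i)"
    using j by (auto simp: N_def)
next
  fix x assume "x \<in> (\<Union>i\<le>nat \<lfloor>g * t\<rfloor>. Tmap_branch g t S i)"
  then obtain i where i: "i \<le> nat \<lfloor>g * t\<rfloor>" "x \<in> Tmap_branch g t S i"
    by auto
  then have fl: "\<lfloor>g * x\<rfloor> = int i" and T: "Tmap g x = g * x - real i"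
    using S by (auto simp: floor_Tmap_branch Tmap_def)
  then have "0 \<le> g * x"
    by linarith
  then have "0 \<le> x"
    using g by (simp add: zero_le_mult_iff)
  have "g * x < g * t"
  proof (cases "i < nat \<lfloor>g * t\<rfloor>")
    case True
    then have "real i + 1 \<le> of_int \<lfloor>g * t\<rfloor>"
      by linarith
    then show ?thesis
      using fl of_int_floor_le[of "g * t"] by linarith
  next
    case False
    then show ?thesis
      using i g t by (auto simp: Tmap_branch_def Tmap_def)
  qed
  then show "x \<in> {x\<in>{0..<t}. Tmap g x \<in> S}"
    using g \<open>0 \<le> x\<close> i T by (auto simp: Tmap_branch_def)
qed

lemma emeasure_Tmap_preimage_Ico:
  assumes g: "g > 0" and S: "S \<in> sets borel" "S \<subseteq> {0..<1}" and t: "0 \<le> t"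
  shows "emeasure lborel {x\<in>{0..<t}. Tmap g x \<in> S} =
    ennreal (1 / g) * (of_nat (nat \<lfloor>g * t\<rfloor>) * emeasure lborel S + emeasure lborel (S \<inter> {0..<Tmap g t}))"
proof -
  define N where "N = nat \<lfloor>g * t\<rfloor>"
  have branch: "emeasure lborel (Tmap_branch g t S i) =
      ennreal (1 / g) * emeasure lborel (S \<inter> {0..<(if i < N then 1 else Tmap g t)})" for i
    unfolding Tmap_branch_def N_def using g S by (intro emeasure_lborel_affine_preimage) auto
  have "disjoint_family_on (Tmap_branch g t S) {..N}"
    unfolding disjoint_family_on_def using floor_Tmap_branch[OF S(2)] by (metis disjoint_iff of_nat_eq_iff)
  moreover have "Tmap_branch g t S i \<in> sets borel" for i
    using S unfolding Tmap_branch_def by measurable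
  ultimately have "emeasure lborel {x\<in>{0..<t}. Tmap g x \<in> S} = (\<Sum>i\<le>N. emeasure lborel (Tmap_branch g t S i))"
    unfolding Tmap_preimage_Ico_eq_UN[OF g S(2) t] N_def[symmetric] by (intro sum_emeasure[symmetric]) auto
  also have "\<dots> = (\<Sum>i<N. emeasure lborel (Tmap_branch g t S i)) + emeasure lborel (Tmap_branch g t S N)"
    by (simp add: lessThan_Suc_atMost[symmetric])
  also have "\<dots> = (\<Sum>i<N. ennreal (1 / g) * emeasure lborel S) + ennreal (1 / g) * emeasure lborel (S \<inter> {0..<Tmap g t})"
    using S by (simp add: branch Int_absorb2)
  finally show ?thesis
    by (simp add: N_def distrib_left mult.left_commute)
qed

lemma sets_unit_borel: "S \<in> sets unit_borel \<longleftrightarrow> S \<in> sets borel \<and> S \<subseteq> {0..<1}"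
  unfolding unit_borel_def by (subst sets_restrict_space_iff) auto

lemma sets_unit_lebesgue: "sets unit_lebesgue = sets unit_borel"
  unfolding unit_lebesgue_def unit_borel_def by (simp add: sets_restrict_space)

lemma space_unit_borel [simp]: "space unit_borel = {0..<1}"
  unfolding unit_borel_def by (simp add: space_restrict_space)

lemma space_unit_lebesgue [simp]: "space unit_lebesgue = {0..<1}"
  unfolding unit_lebesgue_def by (simp add: space_restrict_space)

lemma emeasure_unit_lebesgue: "S \<in> sets unit_borel \<Longrightarrow> emeasure unit_lebesgue S = emeasure lborel S"
  unfolding unit_lebesgue_def sets_unit_borel by (subst emeasure_restrict_space) auto

lemma Tmap_measurable_unit: "Tmap g \<in> measurable unit_borel unit_borel"
  unfolding unit_borel_def using Tmap_in_unit by (intro measurable_restrict_space3) auto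

lemma Tmap_preimage_in_unit_borel:
  "A \<in> sets unit_borel \<Longrightarrow> Tmap g -` A \<inter> {0..<1} \<in> sets unit_borel"
  using Tmap_measurable_unit[of g] by (metis measurable_sets space_unit_borel)

lemma emeasure_lborel_unit:
  fixes S :: "real set"
  assumes "S \<in> sets borel" "S \<subseteq> {0..<1}"
  shows "emeasure lborel S = ennreal (measure lborel S)" and "measure lborel S \<le> 1"
proof -
  have le: "emeasure lborel S \<le> 1"
    using emeasure_mono[of S "{0..<1::real}" lborel] assms by simp
  then show "emeasure lborel S = ennreal (measure lborel S)"
    by (intro emeasure_eq_ennreal_measure) (auto simp: top_unique)
  with le show "measure lborel S \<le> 1"
    by (simp add: ennreal_le_1)
qed

lemma measure_Tmap_preimage_Ico:
  assumes g: "g > 0" and S: "S \<in> sets borel" "S \<subseteq> {0..<1}" and t: "0 \<le> t" "t \<le> 1"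
  shows "measure lborel {x\<in>{0..<t}. Tmap g x \<in> S} =
    (real (nat \<lfloor>g * t\<rfloor>) * measure lborel S + measure lborel (S \<inter> {0..<Tmap g t})) / g"
proof -
  have m: "{x\<in>{0..<t}. Tmap g x \<in> S} \<in> sets borel" "{x\<in>{0..<t}. Tmap g x \<in> S} \<subseteq> {0..<1}"
    using S t by auto
  have S': "S \<inter> {0..<Tmap g t} \<in> sets borel" "S \<inter> {0..<Tmap g t} \<subseteq> {0..<1}"
    using S by auto
  have "ennreal (measure lborel {x\<in>{0..<t}. Tmap g x \<in> S}) =
      ennreal (1 / g) * (of_nat (nat \<lfloor>g * t\<rfloor>) * ennreal (measure lborel S)
        + ennreal (measure lborel (S \<inter> {0..<Tmap g t})))"
    using emeasure_Tmap_preimage_Ico[OF g S t(1)]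
    by (simp only: emeasure_lborel_unit(1)[OF m] emeasure_lborel_unit(1)[OF S] emeasure_lborel_unit(1)[OF S'])
  also have "\<dots> = ennreal ((real (nat \<lfloor>g * t\<rfloor>) * measure lborel S + measure lborel (S \<inter> {0..<Tmap g t})) / g)"
    using g
    by (simp add: ennreal_of_nat_eq_real_of_nat ennreal_mult'[symmetric] ennreal_plus[symmetric]
        divide_inverse mult.commute del: ennreal_plus)
  finally show ?thesis
    using g by (subst (asm) ennreal_inj) auto
qed

section \<open>The Parry measure\<close>

text \<open>Parry's invariant density of \<open>T\<^sub>g\<close> is proportional to \<open>\<Sum>\<^sub>k g\<^sup>-\<^sup>k 1\<^bsub>[0, t\<^sub>k)\<^esub>\<close> with
  \<open>t\<^sub>k = T\<^sub>g\<^sup>k 1\<close>; here \<open>T\<^sub>g\<close> is also applied to \<open>1 \<notin> [0, 1)\<close>, so \<open>t\<^sub>0 = 1\<close> and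
  \<open>t\<^sub>1 = frac g\<close>.\<close>

definition orbit_one :: "real \<Rightarrow> nat \<Rightarrow> real" where
  "orbit_one g k = (Tmap g ^^ k) 1"

definition parry_const :: "real \<Rightarrow> real" where
  "parry_const g = (\<Sum>k. orbit_one g k / g ^ k)"

definition parry_mass :: "real \<Rightarrow> real set \<Rightarrow> real" where
  "parry_mass g S = (\<Sum>k. measure lborel (S \<inter> {0..<orbit_one g k}) / g ^ k)"

definition parry_density :: "real \<Rightarrow> real \<Rightarrow> ennreal" where
  "parry_density g x = ennreal (1 / parry_const g) * (\<Sum>k. ennreal (1 / g ^ k) * indicator {0..<orbit_one g k} x)"

definition parry :: "real \<Rightarrow> real measure" where
  "parry g = density unit_lebesgue (parry_density g)"

lemma orbit_one_0 [simp]: "orbit_one g 0 = 1"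
  by (simp add: orbit_one_def)

lemma orbit_one_Suc: "orbit_one g (Suc k) = Tmap g (orbit_one g k)"
  by (simp add: orbit_one_def)

lemma orbit_one_Suc_less_1: "orbit_one g (Suc k) < 1"
  using Tmap_in_unit by (simp add: orbit_one_Suc)

lemma orbit_one_bounds: "0 \<le> orbit_one g k" "orbit_one g k \<le> 1"
  using Tmap_in_unit[of g] by (cases k; simp add: orbit_one_Suc less_imp_le)+

lemma summable_bounded_div_power:
  fixes g :: real
  assumes "g > 1" and "\<And>k. 0 \<le> f k" "\<And>k. f k \<le> 1"
  shows "summable (\<lambda>k. f k / g ^ k)"
proof (rule summable_comparison_test'[of "\<lambda>k. (1 / g) ^ k" 0])
  show "summable (\<lambda>k. (1 / g) ^ k)"
    using assms(1) by (intro summable_geometric) auto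
  show "norm (f k / g ^ k) \<le> (1 / g) ^ k" for k
    using assms by (simp add: power_divide divide_right_mono)
qed

lemma summable_parry_const: "g > 1 \<Longrightarrow> summable (\<lambda>k. orbit_one g k / g ^ k)"
  by (rule summable_bounded_div_power) (auto simp: orbit_one_bounds)

lemma summable_parry_mass:
  "g > 1 \<Longrightarrow> S \<in> sets borel \<Longrightarrow> S \<subseteq> {0..<1} \<Longrightarrow>
    summable (\<lambda>k. measure lborel (S \<inter> {0..<orbit_one g k}) / g ^ k)"
  by (rule summable_bounded_div_power) (auto intro!: emeasure_lborel_unit)

lemma parry_const_ge_1:
  assumes "g > 1"
  shows "parry_const g \<ge> 1"
  using sum_le_suminf[OF summable_parry_const[OF assms], of "{0}"] assms
  by (simp add: parry_const_def orbit_one_bounds)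

lemma parry_mass_unit: "parry_mass g {0..<1} = parry_const g"
  unfolding parry_mass_def parry_const_def using orbit_one_bounds[of g]
  by (simp add: Int_absorb1)

lemma measure_le_parry_mass:
  assumes g: "g > 1" and S: "S \<in> sets borel" "S \<subseteq> {0..<1}"
  shows "measure lborel S \<le> parry_mass g S"
  using sum_le_suminf[OF summable_parry_mass[OF g S], of "{0}"] g S
  by (simp add: parry_mass_def Int_absorb2)

lemma parry_mass_nonneg:
  assumes g: "g > 1" and S: "S \<in> sets borel" "S \<subseteq> {0..<1}"
  shows "0 \<le> parry_mass g S"
  unfolding parry_mass_def using g by (intro suminf_nonneg summable_parry_mass[OF g S]) auto

lemma parry_mass_eq_0_iff:
  assumes g: "g > 1" and S: "S \<in> sets borel" "S \<subseteq> {0..<1}"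
  shows "parry_mass g S = 0 \<longleftrightarrow> measure lborel S = 0"
proof
  assume "measure lborel S = 0"
  moreover have "measure lborel (S \<inter> {0..<orbit_one g k}) \<le> measure lborel S" for k
    using S emeasure_lborel_unit(1)[OF S] by (intro measure_mono_fmeasurable) (auto simp: fmeasurable_def)
  ultimately show "parry_mass g S = 0"
    unfolding parry_mass_def by (simp add: measure_le_0_iff)
qed (use measure_le_parry_mass[OF assms] measure_nonneg[of lborel S] in auto)

lemma borel_measurable_parry_density: "parry_density g \<in> borel_measurable unit_lebesgue"
proof -
  have "parry_density g \<in> borel_measurable borel"
    unfolding parry_density_def by measurable
  then show ?thesis
    unfolding unit_lebesgue_def by (intro measurable_restrict_space1) simp
qed

lemma sets_parry [measurable_cong]: "sets (parry g) = sets unit_borel"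
  by (simp add: parry_def sets_unit_lebesgue)

lemma space_parry [simp]: "space (parry g) = {0..<1}"
  using sets_eq_imp_space_eq[OF sets_parry] by simp

lemma emeasure_parry:
  assumes g: "g > 1" and S: "S \<in> sets unit_borel"
  shows "emeasure (parry g) S = ennreal (parry_mass g S / parry_const g)"
proof -
  have Sb: "S \<in> sets borel" "S \<subseteq> {0..<1}"
    using S sets_unit_borel by auto
  have "emeasure (parry g) S = (\<integral>\<^sup>+x. parry_density g x * indicator S x \<partial>unit_lebesgue)"
    using S borel_measurable_parry_density by (simp add: parry_def emeasure_density sets_unit_lebesgue)
  also have "\<dots> = (\<integral>\<^sup>+x. parry_density g x * indicator S x * indicator {0..<1} x \<partial>lborel)"
    unfolding unit_lebesgue_def by (subst nn_integral_restrict_space) auto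
  also have "\<dots> = (\<integral>\<^sup>+x. ennreal (1 / parry_const g) *
      (\<Sum>k. ennreal (1 / g ^ k) * indicator (S \<inter> {0..<orbit_one g k}) x) \<partial>lborel)"
    using Sb by (intro nn_integral_cong) (auto simp: parry_density_def indicator_def subset_eq)
  also have "\<dots> = ennreal (1 / parry_const g) * (\<Sum>k. ennreal (1 / g ^ k) * emeasure lborel (S \<inter> {0..<orbit_one g k}))"
    using Sb by (simp add: nn_integral_cmult nn_integral_suminf)
  also have "(\<Sum>k. ennreal (1 / g ^ k) * emeasure lborel (S \<inter> {0..<orbit_one g k})) =
      (\<Sum>k. ennreal (measure lborel (S \<inter> {0..<orbit_one g k}) / g ^ k))"
  proof (intro suminf_cong)
    fix k
    have "emeasure lborel (S \<inter> {0..<orbit_one g k}) = measure lborel (S \<inter> {0..<orbit_one g k})"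
      using Sb by (intro emeasure_lborel_unit) auto
    then show "ennreal (1 / g ^ k) * emeasure lborel (S \<inter> {0..<orbit_one g k}) =
        ennreal (measure lborel (S \<inter> {0..<orbit_one g k}) / g ^ k)"
      using g by (simp add: ennreal_mult'[symmetric])
  qed
  also have "\<dots> = ennreal (parry_mass g S)"
    unfolding parry_mass_def using Sb g
    by (intro suminf_ennreal2 summable_parry_mass) (auto intro!: emeasure_lborel_unit)
  finally show ?thesis
    using parry_const_ge_1[OF g] by (simp add: ennreal_mult'[symmetric])
qed

text \<open>Invariance is a telescoping sum: with \<open>t\<^sub>k = T\<^sub>g\<^sup>k 1\<close>, the \<open>k\<close>-th term of
  \<open>parry_mass g (T\<^sub>g\<^sup>-\<^sup>1 S)\<close> is the \<open>(k+1)\<close>-st term of \<open>parry_mass g S\<close> plus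
  \<open>\<lambda>(S) (g\<^sup>-\<^sup>k t\<^sub>k - g\<^sup>-\<^sup>k\<^sup>-\<^sup>1 t\<^sub>k\<^sub>+\<^sub>1)\<close>.\<close>
lemma parry_mass_Tmap_preimage:
  assumes g: "g > 1" and S: "S \<in> sets borel" "S \<subseteq> {0..<1}"
  shows "parry_mass g (Tmap g -` S \<inter> {0..<1}) = parry_mass g S"
proof -
  define a where "a k = measure lborel (S \<inter> {0..<orbit_one g k}) / g ^ k" for k
  define f where "f k = orbit_one g k / g ^ k" for k
  define m where "m = measure lborel S"
  have term_eq: "measure lborel ((Tmap g -` S \<inter> {0..<1}) \<inter> {0..<orbit_one g k}) / g ^ k
      = m * (f k - f (Suc k)) + a (Suc k)" for k
  proof -
    have "(Tmap g -` S \<inter> {0..<1}) \<inter> {0..<orbit_one g k} = {x\<in>{0..<orbit_one g k}. Tmap g x \<in> S}"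
      using orbit_one_bounds[of g k] by auto
    moreover have "real (nat \<lfloor>g * orbit_one g k\<rfloor>) = g * orbit_one g k - orbit_one g (Suc k)"
      using orbit_one_bounds[of g k] g by (simp add: orbit_one_Suc Tmap_def)
    ultimately have "measure lborel ((Tmap g -` S \<inter> {0..<1}) \<inter> {0..<orbit_one g k}) =
        ((g * orbit_one g k - orbit_one g (Suc k)) * m + measure lborel (S \<inter> {0..<orbit_one g (Suc k)})) / g"
      using measure_Tmap_preimage_Ico[of g S, OF _ S orbit_one_bounds[of g k]] g
      by (simp add: m_def orbit_one_Suc)
    then show ?thesis
      using g by (simp add: a_def f_def field_simps)
  qed
  have "f \<longlonglongrightarrow> 0"
    unfolding f_def by (rule summable_LIMSEQ_zero[OF summable_parry_const[OF g]])
  then have "(\<lambda>k. m * (f k - f (Suc k))) sums (m * f 0)"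
    using sums_mult[OF telescope_sums'] by fastforce
  moreover have "summable a"
    unfolding a_def by (rule summable_parry_mass[OF g S])
  then have "(\<lambda>k. a (Suc k)) sums (suminf a - a 0)"
    by (simp add: sums_iff summable_Suc_iff suminf_split_head)
  moreover have "m * f 0 = a 0"
    using S by (simp add: f_def a_def m_def Int_absorb2)
  ultimately have "(\<lambda>k. measure lborel ((Tmap g -` S \<inter> {0..<1}) \<inter> {0..<orbit_one g k}) / g ^ k) sums suminf a"
    unfolding term_eq using sums_add by fastforce
  then show ?thesis
    unfolding parry_mass_def a_def by (simp add: sums_iff)
qed

lemma is_acip_parry:
  assumes g: "g > 1"
  shows "is_acip (Tmap g) (parry g)"
  unfolding is_acip_def
proof (intro conjI)
  show "sets (parry g) = sets unit_borel" and "space (parry g) = {0..<1}"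
    by (simp_all add: sets_parry)
  have "{0..<1::real} \<in> sets unit_borel"
    by (simp add: sets_unit_borel)
  then show "prob_space (parry g)"
    using parry_const_ge_1[OF g] by (intro prob_spaceI) (simp add: emeasure_parry[OF g] parry_mass_unit)
  show "absolutely_continuous unit_lebesgue (parry g)"
    unfolding parry_def by (intro absolutely_continuousI_density borel_measurable_parry_density)
  show T: "Tmap g \<in> measurable (parry g) (parry g)"
    using Tmap_measurable_unit by (simp add: measurable_cong_sets[OF sets_parry sets_parry])
  show "distr (parry g) (parry g) (Tmap g) = parry g"
  proof (rule measure_eqI)
    fix A assume "A \<in> sets (distr (parry g) (parry g) (Tmap g))"
    then have A: "A \<in> sets unit_borel" "A \<in> sets borel" "A \<subseteq> {0..<1}"
      by (auto simp: sets_parry sets_unit_borel)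
    have "emeasure (distr (parry g) (parry g) (Tmap g)) A = emeasure (parry g) (Tmap g -` A \<inter> {0..<1})"
      using T A by (simp add: emeasure_distr sets_parry)
    also have "\<dots> = emeasure (parry g) A"
      using A by (simp add: emeasure_parry[OF g] Tmap_preimage_in_unit_borel parry_mass_Tmap_preimage[OF g])
    finally show "emeasure (distr (parry g) (parry g) (Tmap g)) A = emeasure (parry g) A" .
  qed simp
qed

lemma parry_null_iff:
  assumes g: "g > 1" and S: "S \<in> sets unit_borel"
  shows "emeasure (parry g) S = 0 \<longleftrightarrow> emeasure unit_lebesgue S = 0"
proof -
  have S': "S \<in> sets borel" "S \<subseteq> {0..<1}"
    using S by (auto simp: sets_unit_borel)
  have "emeasure (parry g) S = 0 \<longleftrightarrow> parry_mass g S = 0"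
    using emeasure_parry[OF g S] parry_const_ge_1[OF g] parry_mass_nonneg[OF g S'] by simp
  also have "\<dots> \<longleftrightarrow> emeasure unit_lebesgue S = 0"
    by (simp add: parry_mass_eq_0_iff[OF g S'] emeasure_unit_lebesgue[OF S] emeasure_lborel_unit(1)[OF S'])
  finally show ?thesis .
qed

section \<open>Uniqueness of the absolutely continuous invariant measure\<close>

lemma (in prob_space) prob_space_eqI_emeasure_le:
  assumes N: "prob_space N" and sets_eq: "sets N = sets M"
    and le: "\<And>S. S \<in> sets M \<Longrightarrow> emeasure M S \<le> emeasure N S"
  shows "M = N"
proof (rule measure_eqI)
  interpret N: prob_space N by (rule N)
  fix S assume S: "S \<in> sets M"
  have "space N = space M"
    by (rule sets_eq_imp_space_eq[OF sets_eq])
  then have "1 - measure N S = measure N (space M - S)"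
    using S sets_eq N.prob_compl[of S] by simp
  also have "\<dots> \<ge> measure M (space M - S)"
    using le[of "space M - S"] S by (simp add: emeasure_eq_measure N.emeasure_eq_measure)
  also have "measure M (space M - S) = 1 - measure M S"
    using S by (simp add: prob_compl)
  finally have "measure N S \<le> measure M S" by simp
  with le[OF S] show "emeasure M S = emeasure N S"
    by (simp add: emeasure_eq_measure N.emeasure_eq_measure)
qed (use sets_eq in simp)

lemma (in prob_space) emeasure_Diff_preimage_eq:
  assumes f: "f \<in> measurable M M" and inv: "distr M M f = M" and A: "A \<in> sets M"
  shows "emeasure M (A - f -` A \<inter> space M) = emeasure M (f -` A \<inter> space M - A)"
proof -
  have B: "f -` A \<inter> space M \<in> sets M"
    using f A by measurable
  have "emeasure M (f -` A \<inter> space M) = emeasure M A"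
    using emeasure_distr[OF f A] by (simp add: inv)
  then show ?thesis
    using A B finite_measure_Diff'[of A "f -` A \<inter> space M"] finite_measure_Diff'[of "f -` A \<inter> space M" A]
    by (simp add: emeasure_eq_measure Int_commute)
qed

lemma emeasure_density_mono_on:
  assumes "G \<in> borel_measurable M" "H \<in> borel_measurable M" "S \<in> sets M"
    and "\<And>x. x \<in> S \<Longrightarrow> x \<in> space M \<Longrightarrow> G x \<le> H x"
  shows "emeasure (density M G) S \<le> emeasure (density M H) S"
  using assms by (auto simp: emeasure_density split: split_indicator intro!: nn_integral_mono)

lemma emeasure_density_strict_mono_on:
  assumes G: "G \<in> borel_measurable M" and H: "H \<in> borel_measurable M" and S: "S \<in> sets M"
    and less: "\<And>x. x \<in> S \<Longrightarrow> H x < G x" and "S \<notin> null_sets M"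
    and fin: "emeasure (density M H) S \<noteq> \<infinity>"
  shows "emeasure (density M H) S < emeasure (density M G) S"
proof -
  have "\<not> (AE x in M. G x * indicator S x \<le> H x * indicator S x)"
  proof
    assume "AE x in M. G x * indicator S x \<le> H x * indicator S x"
    then have "AE x in M. x \<notin> S"
      by eventually_elim (metis indicator_simps(1) less mult_1_right not_le)
    then show False
      using \<open>S \<notin> null_sets M\<close> S by (simp add: AE_iff_null_sets)
  qed
  then have "(\<integral>\<^sup>+x. H x * indicator S x \<partial>M) < (\<integral>\<^sup>+x. G x * indicator S x \<partial>M)"
    using G H S fin less
    by (intro nn_integral_less) (auto simp: emeasure_density indicator_def less_imp_le intro!: AE_I2)
  then show ?thesis
    using G H S by (simp add: emeasure_density)
qed

lemma density_eq_if_superlevel_null: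
  assumes G: "G \<in> borel_measurable M" and H: "H \<in> borel_measurable M"
    and prob: "prob_space (density M G)" "prob_space (density M H)"
    and null: "{x \<in> space M. H x < G x} \<in> null_sets M"
  shows "density M G = density M H"
proof -
  interpret \<mu>: prob_space "density M G" by (rule prob(1))
  let ?A = "{x \<in> space M. H x < G x}"
  have "emeasure (density M G) S \<le> emeasure (density M H) S" if S: "S \<in> sets M" for S
  proof -
    have "emeasure (density M G) S = emeasure (density M G) (S - ?A)"
      using null S absolutely_continuousI_density[OF G]
      by (intro emeasure_Diff_null_set[symmetric]) (auto simp: absolutely_continuous_def)
    also have "\<dots> \<le> emeasure (density M H) (S - ?A)"
      using S null by (intro emeasure_density_mono_on[OF G H]) auto
    also have "\<dots> \<le> emeasure (density M H) S"
      using S by (intro emeasure_mono) auto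
    finally show ?thesis .
  qed
  then show ?thesis
    using prob by (intro \<mu>.prob_space_eqI_emeasure_le) auto
qed

lemma superlevel_not_conull:
  assumes G: "G \<in> borel_measurable M" and H: "H \<in> borel_measurable M"
    and prob: "prob_space (density M G)" "prob_space (density M H)"
  shows "space M - {x \<in> space M. H x < G x} \<notin> null_sets M"
proof
  interpret \<mu>: prob_space "density M G" by (rule prob(1))
  interpret \<nu>: prob_space "density M H" by (rule prob(2))
  define A where "A = {x \<in> space M. H x < G x}"
  have A: "A \<in> sets M"
    unfolding A_def using G H by measurable
  assume "space M - {x \<in> space M. H x < G x} \<in> null_sets M"
  then have null: "space M - A \<in> null_sets (density M F)" if "F \<in> borel_measurable M" for F
    using absolutely_continuousI_density[OF that] by (auto simp: absolutely_continuous_def A_def)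
  have "AE x in density M F. x \<in> A" if "F \<in> borel_measurable M" for F
    using AE_not_in[OF null[OF that]] AE_space[of "density M F"] by eventually_elim auto
  then have "emeasure (density M G) A = 1" "emeasure (density M H) A = 1"
    using A G H by (simp_all add: \<mu>.emeasure_eq_1_AE \<nu>.emeasure_eq_1_AE)
  moreover have "A \<notin> null_sets M"
    using absolutely_continuousI_density[OF H] \<open>emeasure (density M H) A = 1\<close> null_setsD1[of A "density M H"]
    by (auto simp: absolutely_continuous_def)
  then have "emeasure (density M H) A < emeasure (density M G) A"
    using A \<nu>.emeasure_finite[of A] by (intro emeasure_density_strict_mono_on[OF G H]) (auto simp: A_def)
  ultimately show False
    by simp
qed

text \<open>Let \<open>A\<close> be the set where the density \<open>G\<close> of one invariant probability exceeds the
  density \<open>H\<close> of another. Both measures give \<open>A - f\<^sup>-\<^sup>1 A\<close> and \<open>f\<^sup>-\<^sup>1 A - A\<close> equal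
  mass, but the first set favours \<open>G\<close> and the second \<open>H\<close>; so \<open>A\<close> is invariant up to null
  sets, and ergodicity forces it to be null.\<close>
lemma invariant_densities_eq:
  fixes M :: "'a measure" and f :: "'a \<Rightarrow> 'a"
  assumes f: "f \<in> measurable M M"
    and ergodic: "\<And>A. A \<in> sets M \<Longrightarrow> A - f -` A \<inter> space M \<in> null_sets M \<Longrightarrow>
      f -` A \<inter> space M - A \<in> null_sets M \<Longrightarrow> A \<in> null_sets M \<or> space M - A \<in> null_sets M"
    and G: "G \<in> borel_measurable M" and H: "H \<in> borel_measurable M"
    and prob: "prob_space (density M G)" "prob_space (density M H)"
    and inv: "distr (density M G) (density M G) f = density M G"
      "distr (density M H) (density M H) f = density M H"
    and H_null: "\<And>S. S \<in> null_sets (density M H) \<Longrightarrow> S \<in> null_sets M"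
  shows "density M G = density M H"
proof -
  let ?\<mu> = "density M G" and ?\<nu> = "density M H"
  interpret \<mu>: prob_space ?\<mu> by (rule prob(1))
  interpret \<nu>: prob_space ?\<nu> by (rule prob(2))
  define A where "A = {x \<in> space M. H x < G x}"
  define B where "B = f -` A \<inter> space M"
  have A: "A \<in> sets M"
    unfolding A_def using G H by measurable
  have B: "B \<in> sets M"
    unfolding B_def using f A by measurable
  have meas: "measurable ?\<mu> ?\<mu> = measurable M M" "measurable ?\<nu> ?\<nu> = measurable M M"
    by (rule measurable_cong_sets; simp)+
  have \<mu>_diff: "emeasure ?\<mu> (A - B) = emeasure ?\<mu> (B - A)"
    using \<mu>.emeasure_Diff_preimage_eq[of f A] f inv(1) A by (simp add: meas B_def)
  have \<nu>_diff: "emeasure ?\<nu> (A - B) = emeasure ?\<nu> (B - A)"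
    using \<nu>.emeasure_Diff_preimage_eq[of f A] f inv(2) A by (simp add: meas B_def)
  have AB_null: "A - B \<in> null_sets M"
  proof (rule ccontr)
    assume "A - B \<notin> null_sets M"
    then have "emeasure ?\<nu> (A - B) < emeasure ?\<mu> (A - B)"
      using A B \<nu>.emeasure_finite[of "A - B"]
      by (intro emeasure_density_strict_mono_on[OF G H]) (auto simp: A_def)
    also have "\<dots> \<le> emeasure ?\<nu> (A - B)"
      unfolding \<mu>_diff \<nu>_diff using A B by (intro emeasure_density_mono_on[OF G H]) (auto simp: A_def)
    finally show False by simp
  qed
  then have "B - A \<in> null_sets ?\<nu>"
    using absolutely_continuousI_density[OF H] \<nu>_diff A B by (auto simp: absolutely_continuous_def null_sets_def)
  then have "B - A \<in> null_sets M"
    by (rule H_null)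
  then have "A \<in> null_sets M"
    using ergodic[OF A] AB_null superlevel_not_conull[OF G H prob] unfolding A_def B_def by blast
  then show ?thesis
    using density_eq_if_superlevel_null[OF G H prob] by (simp add: A_def)
qed

lemma measure_eqI_Iio:
  fixes M N :: "real measure"
  assumes sets: "sets M = sets borel" "sets N = sets borel"
    and fin: "\<And>x. emeasure M {..<x} < \<infinity>"
    and eq: "\<And>x. emeasure M {..<x} = emeasure N {..<x}"
  shows "M = N"
proof (rule measure_eqI_generator_eq_countable)
  let ?LT = "\<lambda>a::real. {..<a}" let ?E = "range ?LT"
  show "Int_stable ?E"
  proof (auto simp: Int_stable_def)
    fix a b :: real
    have "{..<a} \<inter> {..<b} = {..<min a b}"
      by auto
    then show "{..<a} \<inter> {..<b} \<in> range lessThan"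
      by simp
  qed
  show "?E \<subseteq> Pow UNIV" "sets M = sigma_sets UNIV ?E" "sets N = sigma_sets UNIV ?E"
    unfolding sets borel_Iio by auto
  show "?LT`Rats \<subseteq> ?E" "\<And>a. a \<in> ?LT`Rats \<Longrightarrow> emeasure M a \<noteq> \<infinity>"
    using fin by (auto simp: less_top)
  show "(\<Union>i\<in>Rats. ?LT i) = UNIV"
  proof auto
    fix x :: real
    obtain q where "q \<in> \<rat>" "x < q" "q < x + 1"
      using Rats_dense_in_real[of x "x + 1"] by auto
    then show "\<exists>q\<in>\<rat>. x < q"
      by auto
  qed
qed (auto intro: eq countable_rat)

lemma emeasure_Int_lessThan_if_Ico_proportional:
  fixes A :: "real set"
  assumes A: "A \<in> sets borel" "A \<subseteq> {0..<1}"
    and proportional: "\<And>s. 0 \<le> s \<Longrightarrow> s \<le> 1 \<Longrightarrow> measure lborel (A \<inter> {0..<s}) = measure lborel A * s"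
  shows "emeasure lborel (A \<inter> {..<x}) = ennreal (measure lborel A) * emeasure lborel ({0..<1} \<inter> {..<x})"
proof -
  consider "x \<le> 0" | "1 \<le> x" | "0 < x" "x < 1"
    by linarith
  then show ?thesis
  proof cases
    case 1
    then have "A \<inter> {..<x} = {}" "{0..<1} \<inter> {..<x} = {}"
      using A by auto
    then show ?thesis
      by simp
  next
    case 2
    then have "A \<inter> {..<x} = A" "{0..<1} \<inter> {..<x} = {0..<1}"
      using A by auto
    then show ?thesis
      using emeasure_lborel_unit(1)[OF A] by simp
  next
    case 3
    then have "A \<inter> {..<x} = A \<inter> {0..<x}" "{0..<1} \<inter> {..<x} = {0..<x}"
      using A by auto
    moreover have "emeasure lborel (A \<inter> {0..<x}) = ennreal (measure lborel A * x)"
      using emeasure_lborel_unit(1)[of "A \<inter> {0..<x}"] A proportional[of x] 3 by auto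
    ultimately show ?thesis
      using 3 by (simp add: ennreal_mult)
  qed
qed

lemma emeasure_Int_eq_if_Ico_proportional:
  fixes A :: "real set"
  assumes A: "A \<in> sets borel" "A \<subseteq> {0..<1}"
    and proportional: "\<And>s. 0 \<le> s \<Longrightarrow> s \<le> 1 \<Longrightarrow> measure lborel (A \<inter> {0..<s}) = measure lborel A * s"
    and S: "S \<in> sets borel"
  shows "emeasure lborel (A \<inter> S) = ennreal (measure lborel A) * emeasure lborel ({0..<1} \<inter> S)"
proof -
  define m where "m = measure lborel A"
  let ?N1 = "density lborel (indicator A)"
    and ?N2 = "density lborel (\<lambda>x::real. ennreal m * indicator {0..<1} x)"
  have N1: "emeasure ?N1 S = emeasure lborel (A \<inter> S)" if "S \<in> sets borel" for S
  proof -
    have "emeasure ?N1 S = (\<integral>\<^sup>+x. indicator (A \<inter> S) x \<partial>lborel)"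
      using that A by (simp add: emeasure_density indicator_inter_arith)
    then show ?thesis
      using that A by simp
  qed
  have N2: "emeasure ?N2 S = ennreal m * emeasure lborel ({0..<1} \<inter> S)" if "S \<in> sets borel" for S
  proof -
    have "emeasure ?N2 S = (\<integral>\<^sup>+x. ennreal m * indicator ({0..<1} \<inter> S) x \<partial>lborel)"
      using that by (simp add: emeasure_density indicator_inter_arith mult.assoc)
    then show ?thesis
      using that by (simp add: nn_integral_cmult)
  qed
  have "?N1 = ?N2"
  proof (rule measure_eqI_Iio)
    fix x :: real
    have "emeasure ?N1 {..<x} \<le> emeasure lborel A"
      using A by (simp add: N1 emeasure_mono)
    then show "emeasure ?N1 {..<x} < \<infinity>"
      using emeasure_lborel_unit(1)[OF A] by (simp add: order.strict_trans1)
    show "emeasure ?N1 {..<x} = emeasure ?N2 {..<x}"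
      using emeasure_Int_lessThan_if_Ico_proportional[OF A proportional, of x]
      by (simp add: N1 N2 m_def[symmetric])
  qed simp_all
  then show ?thesis
    using N1[OF S] N2[OF S] by (simp add: m_def)
qed

lemma measure_Int_Ico_proportional_trivial:
  fixes A :: "real set"
  assumes A: "A \<in> sets borel" "A \<subseteq> {0..<1}"
    and proportional: "\<And>s. 0 \<le> s \<Longrightarrow> s \<le> 1 \<Longrightarrow> measure lborel (A \<inter> {0..<s}) = measure lborel A * s"
  shows "measure lborel A = 0 \<or> measure lborel A = 1"
proof -
  define m where "m = measure lborel A"
  have m: "0 \<le> m" "emeasure lborel A = m"
    using emeasure_lborel_unit[OF A] by (auto simp: m_def)
  have "ennreal m = ennreal m * ennreal m"
    using emeasure_Int_eq_if_Ico_proportional[OF A proportional A(1)] A m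
    by (simp add: m_def Int_absorb1)
  then have "m = m * m"
    using m by (simp add: ennreal_mult'[symmetric])
  then show ?thesis
    by (auto simp: m_def[symmetric])
qed

lemma measure_Int_Ico_invariant:
  assumes g: "g > 0" and A: "A \<in> sets borel" "A \<subseteq> {0..<1}"
    and null: "A - Tmap g -` A \<in> null_sets lborel" "Tmap g -` A \<inter> {0..<1} - A \<in> null_sets lborel"
    and s: "0 \<le> s" "s \<le> 1"
  shows "measure lborel (A \<inter> {0..<s}) = ((g * s - Tmap g s) * measure lborel A + measure lborel (A \<inter> {0..<Tmap g s})) / g"
proof -
  have "AE x in lborel. x \<in> A \<inter> {0..<s} \<longleftrightarrow> x \<in> {x\<in>{0..<s}. Tmap g x \<in> A}"
    using AE_not_in[OF null(1)] AE_not_in[OF null(2)] by eventually_elim (use s in auto)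
  then have "measure lborel (A \<inter> {0..<s}) = measure lborel {x\<in>{0..<s}. Tmap g x \<in> A}"
    using A by (intro measure_eq_AE) auto
  also have "\<dots> = (real (nat \<lfloor>g * s\<rfloor>) * measure lborel A + measure lborel (A \<inter> {0..<Tmap g s})) / g"
    using g A s by (intro measure_Tmap_preimage_Ico) auto
  also have "real (nat \<lfloor>g * s\<rfloor>) = g * s - Tmap g s"
    using s g by (simp add: Tmap_def)
  finally show ?thesis .
qed

text \<open>Ergodicity of \<open>T\<^sub>g\<close>: for an invariant set \<open>A\<close> the discrepancy
  \<open>\<phi>(s) = \<lambda>(A \<inter> [0, s)) - \<lambda>(A) s\<close> satisfies \<open>\<phi>(s) = \<phi>(T\<^sub>g s) / g\<close>, so it is bounded
  by \<open>g\<^sup>-\<^sup>k\<close> for every \<open>k\<close>.\<close>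
lemma Tmap_invariant_set_trivial:
  assumes g: "g > 1" and A: "A \<in> sets borel" "A \<subseteq> {0..<1}"
    and null: "A - Tmap g -` A \<in> null_sets lborel" "Tmap g -` A \<inter> {0..<1} - A \<in> null_sets lborel"
  shows "measure lborel A = 0 \<or> measure lborel A = 1"
proof (rule measure_Int_Ico_proportional_trivial[OF A])
  define m where "m = measure lborel A"
  define \<phi> where "\<phi> s = measure lborel (A \<inter> {0..<s}) - m * s" for s
  have m: "0 \<le> m" "m \<le> 1"
    using emeasure_lborel_unit(2)[OF A] by (auto simp: m_def)
  have rec: "\<phi> s = \<phi> (Tmap g s) / g" if "0 \<le> s" "s \<le> 1" for s
    using measure_Int_Ico_invariant[OF _ A null that] g unfolding \<phi>_def m_def by (simp add: field_simps)
  have bound: "\<bar>\<phi> s\<bar> \<le> (1 / g) ^ k" if "0 \<le> s" "s \<le> 1" for k s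
    using that
  proof (induction k arbitrary: s)
    case 0
    have "measure lborel (A \<inter> {0..<s}) \<le> 1" "m * s \<le> 1"
      using A m 0 by (auto intro!: emeasure_lborel_unit(2) mult_le_one)
    moreover have "0 \<le> m * s"
      using m 0 by simp
    ultimately show ?case
      using measure_nonneg[of lborel "A \<inter> {0..<s}"] unfolding \<phi>_def abs_le_iff power_0 by linarith
  next
    case (Suc k)
    have "\<bar>\<phi> (Tmap g s)\<bar> / g \<le> (1 / g) ^ k / g"
      using Suc.IH Tmap_in_unit[of g s] g by (intro divide_right_mono) auto
    then show ?case
      using rec[OF Suc.prems] g by (simp add: abs_divide power_divide mult.commute)
  qed
  fix s :: real assume s: "0 \<le> s" "s \<le> 1"
  have "\<phi> s = 0"
  proof (rule ccontr)
    assume "\<phi> s \<noteq> 0"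
    then obtain k where "(1 / g) ^ k < \<bar>\<phi> s\<bar>"
      using real_arch_pow_inv[of "\<bar>\<phi> s\<bar>" "1 / g"] g by auto
    with bound[OF s, of k] show False by simp
  qed
  then show "measure lborel (A \<inter> {0..<s}) = measure lborel A * s"
    by (simp add: \<phi>_def m_def mult.commute)
qed

lemma null_sets_unit_lebesgue: "X \<in> null_sets unit_lebesgue \<longleftrightarrow> X \<in> null_sets lborel \<and> X \<subseteq> {0..<1}"
  unfolding unit_lebesgue_def by (subst null_sets_restrict_space) auto

lemma Tmap_ergodic:
  assumes g: "g > 1" and A: "A \<in> sets unit_lebesgue"
    and null: "A - Tmap g -` A \<inter> {0..<1} \<in> null_sets unit_lebesgue"
      "Tmap g -` A \<inter> {0..<1} - A \<in> null_sets unit_lebesgue"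
  shows "A \<in> null_sets unit_lebesgue \<or> {0..<1} - A \<in> null_sets unit_lebesgue"
proof -
  have A': "A \<in> sets borel" "A \<subseteq> {0..<1}"
    using A by (auto simp: sets_unit_lebesgue sets_unit_borel)
  then have "A - Tmap g -` A = A - Tmap g -` A \<inter> {0..<1}"
    by blast
  then have "measure lborel A = 0 \<or> measure lborel A = 1"
    using null A' by (intro Tmap_invariant_set_trivial[OF g]) (auto simp: null_sets_unit_lebesgue)
  moreover have "measure lborel ({0..<1} - A) = 1 - measure lborel A"
    using A' emeasure_lborel_unit(1)[OF A'] by (subst measure_Diff) (auto simp: fmeasurable_def)
  ultimately show ?thesis
    unfolding null_sets_unit_lebesgue
    using A' emeasure_lborel_unit(1)[OF A'] emeasure_lborel_unit(1)[of "{0..<1} - A"]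
    by (auto simp: null_sets_def)
qed

lemma is_acip_Tmap_iff:
  assumes g: "g > 1"
  shows "is_acip (Tmap g) \<mu> \<longleftrightarrow> \<mu> = parry g"
proof
  assume "is_acip (Tmap g) \<mu>"
  then have sets_\<mu>: "sets \<mu> = sets unit_lebesgue" and "prob_space \<mu>"
    and ac: "absolutely_continuous unit_lebesgue \<mu>" and inv: "distr \<mu> \<mu> (Tmap g) = \<mu>"
    by (auto simp: is_acip_def sets_unit_lebesgue)
  interpret finite_measure unit_lebesgue
    by (intro finite_measureI) (simp add: emeasure_unit_lebesgue sets_unit_borel)
  have \<mu>_density: "density unit_lebesgue (RN_deriv unit_lebesgue \<mu>) = \<mu>"
    using sets_\<mu> ac by (intro density_RN_deriv) auto
  have "density unit_lebesgue (RN_deriv unit_lebesgue \<mu>) = density unit_lebesgue (parry_density g)"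
  proof (rule invariant_densities_eq)
    show "Tmap g \<in> measurable unit_lebesgue unit_lebesgue"
      using Tmap_measurable_unit by (simp add: measurable_cong_sets[OF sets_unit_lebesgue sets_unit_lebesgue])
    show "RN_deriv unit_lebesgue \<mu> \<in> borel_measurable unit_lebesgue"
      by (rule borel_measurable_RN_deriv)
    show "parry_density g \<in> borel_measurable unit_lebesgue"
      by (rule borel_measurable_parry_density)
    show "prob_space (density unit_lebesgue (RN_deriv unit_lebesgue \<mu>))"
      and "distr (density unit_lebesgue (RN_deriv unit_lebesgue \<mu>)) (density unit_lebesgue (RN_deriv unit_lebesgue \<mu>)) (Tmap g)
        = density unit_lebesgue (RN_deriv unit_lebesgue \<mu>)"
      unfolding \<mu>_density by (fact \<open>prob_space \<mu>\<close> inv)+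
    show "prob_space (density unit_lebesgue (parry_density g))"
      and "distr (density unit_lebesgue (parry_density g)) (density unit_lebesgue (parry_density g)) (Tmap g)
        = density unit_lebesgue (parry_density g)"
      using is_acip_parry[OF g] by (simp_all add: is_acip_def parry_def)
    show "A \<in> null_sets unit_lebesgue \<or> space unit_lebesgue - A \<in> null_sets unit_lebesgue"
      if "A \<in> sets unit_lebesgue" "A - Tmap g -` A \<inter> space unit_lebesgue \<in> null_sets unit_lebesgue"
        "Tmap g -` A \<inter> space unit_lebesgue - A \<in> null_sets unit_lebesgue" for A
      using Tmap_ergodic[OF g] that by simp
    show "S \<in> null_sets unit_lebesgue" if "S \<in> null_sets (density unit_lebesgue (parry_density g))" for S
    proof -
      have "S \<in> sets unit_borel" "emeasure (parry g) S = 0"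
        using that by (simp_all add: null_sets_def parry_def sets_unit_lebesgue)
      then show ?thesis
        using parry_null_iff[OF g] by (simp add: null_sets_def sets_unit_lebesgue)
    qed
  qed
  then show "\<mu> = parry g"
    by (simp add: \<mu>_density parry_def)
qed (simp add: is_acip_parry[OF g])

section \<open>The composite maps \<open>T\<^sub>\<beta> \<circ> T\<^sub>n\<close> and \<open>T\<^sub>n \<circ> T\<^sub>\<beta>\<close>\<close>

lemma Tmap_preimage_null_sets:
  assumes g: "g > 0" and N: "N \<in> null_sets unit_lebesgue"
  shows "Tmap g -` N \<inter> {0..<1} \<in> null_sets unit_lebesgue"
proof -
  have N': "N \<in> sets borel" "N \<subseteq> {0..<1}" "emeasure lborel N = 0"
    using N unfolding null_sets_unit_lebesgue by (auto simp: null_sets_def)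
  have "emeasure lborel (N \<inter> {0..<Tmap g 1}) = 0"
    by (rule emeasure_eq_0[OF _ N'(3)]) (use N'(1) in auto)
  then have "emeasure lborel {x\<in>{0..<1}. Tmap g x \<in> N} = 0"
    using emeasure_Tmap_preimage_Ico[OF g N'(1,2), of 1] N'(3) by simp
  moreover have "{x\<in>{0..<1}. Tmap g x \<in> N} = Tmap g -` N \<inter> {0..<1}"
    by auto
  ultimately show ?thesis
    unfolding null_sets_unit_lebesgue using N'(1) by (auto simp: null_sets_def)
qed

lemma absolutely_continuous_distr_Tmap:
  assumes g: "g > 0" and sets_\<mu>: "sets \<mu> = sets unit_borel" and ac: "absolutely_continuous unit_lebesgue \<mu>"
  shows "absolutely_continuous unit_lebesgue (distr \<mu> \<mu> (Tmap g))"
  unfolding absolutely_continuous_def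
proof
  fix N assume N: "N \<in> null_sets unit_lebesgue"
  have space_\<mu>: "space \<mu> = {0..<1}"
    using sets_eq_imp_space_eq[OF sets_\<mu>] by simp
  have "Tmap g \<in> measurable \<mu> \<mu>"
    using Tmap_measurable_unit by (simp add: measurable_cong_sets[OF sets_\<mu> sets_\<mu>])
  moreover have "Tmap g -` N \<inter> space \<mu> \<in> null_sets \<mu>"
    using Tmap_preimage_null_sets[OF g N] ac space_\<mu> by (auto simp: absolutely_continuous_def)
  ultimately show "N \<in> null_sets (distr \<mu> \<mu> (Tmap g))"
    using N by (auto simp: null_sets_def emeasure_distr sets_\<mu> sets_unit_lebesgue)
qed

lemma is_acip_distr_Tmap:
  assumes a: "a > 0" and b: "b > 0" and acip: "is_acip (Tmap a \<circ> Tmap b) \<mu>"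
  shows "is_acip (Tmap b \<circ> Tmap a) (distr \<mu> \<mu> (Tmap b))"
proof -
  have sets_\<mu>: "sets \<mu> = sets unit_borel" and "prob_space \<mu>"
    and ac: "absolutely_continuous unit_lebesgue \<mu>" and inv: "distr \<mu> \<mu> (Tmap a \<circ> Tmap b) = \<mu>"
    using acip by (auto simp: is_acip_def)
  interpret prob_space \<mu> by fact
  let ?\<nu> = "distr \<mu> \<mu> (Tmap b)"
  have meas: "measurable \<mu> \<mu> = measurable unit_borel unit_borel"
    by (rule measurable_cong_sets[OF sets_\<mu> sets_\<mu>])
  have Ta: "Tmap a \<in> measurable \<mu> \<mu>" and Tb: "Tmap b \<in> measurable \<mu> \<mu>"
    unfolding meas by (fact Tmap_measurable_unit)+
  have sets_\<nu>: "sets ?\<nu> = sets unit_borel"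
    by (simp add: sets_\<mu>)
  have meas_\<nu>: "measurable ?\<nu> ?\<nu> = measurable \<mu> \<mu>"
    by (rule measurable_cong_sets) simp_all
  show ?thesis
    unfolding is_acip_def
  proof (intro conjI)
    show "sets ?\<nu> = sets unit_borel" "space ?\<nu> = {0..<1}"
      using sets_\<nu> sets_eq_imp_space_eq[OF sets_\<mu>] by simp_all
    show "prob_space ?\<nu>"
      using Tb by (rule prob_space_distr)
    show "Tmap b \<circ> Tmap a \<in> measurable ?\<nu> ?\<nu>"
      unfolding meas_\<nu> using Ta Tb by (rule measurable_comp)
    show "absolutely_continuous unit_lebesgue ?\<nu>"
      by (rule absolutely_continuous_distr_Tmap[OF b sets_\<mu> ac])
    have meas_\<mu>_\<nu>: "measurable \<mu> ?\<nu> = measurable \<mu> \<mu>"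
      by (rule measurable_cong_sets) simp_all
    have Tab: "Tmap a \<circ> Tmap b \<in> measurable \<mu> \<mu>" and Tba: "Tmap b \<circ> Tmap a \<in> measurable \<mu> \<mu>"
      using Ta Tb by (auto intro: measurable_comp)
    have "distr ?\<nu> ?\<nu> (Tmap b \<circ> Tmap a) = distr \<mu> ?\<nu> ((Tmap b \<circ> Tmap a) \<circ> Tmap b)"
      by (rule distr_distr) (use Tba Tb in \<open>simp_all add: meas_\<mu>_\<nu>\<close>)
    also have "(Tmap b \<circ> Tmap a) \<circ> Tmap b = Tmap b \<circ> (Tmap a \<circ> Tmap b)"
      by (simp add: comp_assoc)
    also have "distr \<mu> ?\<nu> (Tmap b \<circ> (Tmap a \<circ> Tmap b)) = distr (distr \<mu> \<mu> (Tmap a \<circ> Tmap b)) ?\<nu> (Tmap b)"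
      by (rule distr_distr[symmetric]) (use Tb Tab in \<open>simp_all add: meas_\<mu>_\<nu>\<close>)
    also have "\<dots> = ?\<nu>"
      unfolding inv by (rule distr_cong) simp_all
    finally show "distr ?\<nu> ?\<nu> (Tmap b \<circ> Tmap a) = ?\<nu>" .
  qed
qed

text \<open>Pushing forward by one factor is a bijection between the acips of \<open>T\<^sub>a \<circ> T\<^sub>b\<close> and
  of \<open>T\<^sub>b \<circ> T\<^sub>a\<close>, with inverse the push-forward by the other factor.\<close>
lemma ex1_acip_Tmap_comp_swap:
  assumes a: "a > 0" and b: "b > 0" and ex1: "\<exists>!\<mu>. is_acip (Tmap a \<circ> Tmap b) \<mu>"
  shows "\<exists>!\<nu>. is_acip (Tmap b \<circ> Tmap a) \<nu>"
proof -
  obtain \<mu> where \<mu>: "is_acip (Tmap a \<circ> Tmap b) \<mu>"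
    and uniq: "\<And>\<mu>'. is_acip (Tmap a \<circ> Tmap b) \<mu>' \<Longrightarrow> \<mu>' = \<mu>"
    using ex1 unfolding Ex1_def by blast
  have "\<nu> = distr \<mu> \<mu> (Tmap b)" if \<nu>: "is_acip (Tmap b \<circ> Tmap a) \<nu>" for \<nu>
  proof -
    have sets_\<nu>: "sets \<nu> = sets unit_borel" and inv: "distr \<nu> \<nu> (Tmap b \<circ> Tmap a) = \<nu>"
      using \<nu> by (auto simp: is_acip_def)
    have meas: "measurable \<nu> \<nu> = measurable unit_borel unit_borel"
      by (rule measurable_cong_sets[OF sets_\<nu> sets_\<nu>])
    have "distr \<nu> \<nu> (Tmap a) = \<mu>"
      by (rule uniq[OF is_acip_distr_Tmap[OF b a \<nu>]])
    then have "distr (distr \<nu> \<nu> (Tmap a)) \<nu> (Tmap b) = distr \<mu> \<mu> (Tmap b)"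
      using \<mu> sets_\<nu> by (intro distr_cong) (auto simp: is_acip_def)
    moreover have "distr (distr \<nu> \<nu> (Tmap a)) \<nu> (Tmap b) = distr \<nu> \<nu> (Tmap b \<circ> Tmap a)"
      using Tmap_measurable_unit by (subst distr_distr) (simp_all add: meas)
    ultimately show ?thesis
      using inv by simp
  qed
  with is_acip_distr_Tmap[OF a b \<mu>] show ?thesis
    by (rule ex1I)
qed

lemma mu_comp_nat_left:
  assumes "real n * \<beta> > 1"
  shows "mu_comp (real n) \<beta> = parry (real n * \<beta>)"
proof -
  have "Tmap (real n) \<circ> Tmap \<beta> = Tmap (real n * \<beta>)"
    by (auto simp: Tmap_nat_Tmap)
  then show ?thesis
    unfolding mu_comp_def using is_acip_Tmap_iff[OF assms] by (intro the_equality) simp_all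
qed

lemma sets_mu_comp_nat_right:
  assumes "\<beta> > 0" and "n > 0" and "real n * \<beta> > 1"
  shows "sets (mu_comp \<beta> (real n)) = sets unit_borel"
proof -
  have "Tmap (real n) \<circ> Tmap \<beta> = Tmap (real n * \<beta>)"
    by (auto simp: Tmap_nat_Tmap)
  then have "\<exists>!\<mu>. is_acip (Tmap (real n) \<circ> Tmap \<beta>) \<mu>"
    using is_acip_Tmap_iff[OF assms(3)] by simp
  from ex1_acip_Tmap_comp_swap[OF _ _ this] have "\<exists>!\<mu>. is_acip (Tmap \<beta> \<circ> Tmap (real n)) \<mu>"
    using assms by simp
  then have "is_acip (Tmap \<beta> \<circ> Tmap (real n)) (mu_comp \<beta> (real n))"
    unfolding mu_comp_def by (rule theI')
  then show ?thesis
    by (simp add: is_acip_def)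
qed

lemma suminf_emeasure_slice:
  fixes M :: "'b measure"
  assumes "sets M = sets N" "range B \<subseteq> sets (K \<Otimes>\<^sub>M N)" "disjoint_family B"
  shows "(\<Sum>j. emeasure M {x. (i, x) \<in> B j}) = emeasure M {x. (i, x) \<in> \<Union>(range B)}"
proof -
  have "Pair i -` B j \<in> sets M" for j
    using assms(1,2) sets_Pair1[of "B j" K N i] by auto
  then have "(\<Sum>j. emeasure M {x. (i, x) \<in> B j}) = emeasure M (\<Union>j. {x. (i, x) \<in> B j})"
    using assms(3) by (intro suminf_emeasure) (auto simp: vimage_def disjoint_family_on_def disjoint_iff)
  moreover have "(\<Union>j. {x. (i, x) \<in> B j}) = {x. (i, x) \<in> \<Union>(range B)}"
    by auto
  ultimately show ?thesis
    by simp
qed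

lemma emeasure_mu_alt_Times_0:
  assumes sets0: "sets (mu_comp (real n) \<beta>) = sets unit_borel"
    and sets1: "sets (mu_comp \<beta> (real n)) = sets unit_borel"
    and A: "A \<in> sets unit_borel"
  shows "emeasure (mu_alt \<beta> n) ({0} \<times> A) = ennreal (1/2) * emeasure (mu_comp (real n) \<beta>) A"
proof -
  define F where "F = (\<lambda>S. ennreal (1/2) * emeasure (mu_comp (real n) \<beta>) {x. (0::nat, x) \<in> S}
    + ennreal (1/2) * emeasure (mu_comp \<beta> (real n)) {x. (1, x) \<in> S})"
  define PM where "PM = count_space {0, 1::nat} \<Otimes>\<^sub>M unit_borel"
  have "emeasure (measure_of ({0, 1} \<times> {0..<1}) (sets PM) F) ({0} \<times> A) = F ({0} \<times> A)"
  proof (rule emeasure_measure_of_sigma)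
    show "sigma_algebra ({0, 1::nat} \<times> {0..<1}) (sets PM)"
      using sets.sigma_algebra_axioms[of PM] by (simp add: PM_def space_pair_measure)
    show "positive (sets PM) F"
      by (simp add: positive_def F_def)
    show "{0} \<times> A \<in> sets PM"
      unfolding PM_def using A by (intro pair_measureI) auto
    show "countably_additive (sets PM) F"
      unfolding countably_additive_def F_def
      using suminf_emeasure_slice[OF sets0, where K = "count_space {0, 1::nat}", folded PM_def]
        suminf_emeasure_slice[OF sets1, where K = "count_space {0, 1::nat}", folded PM_def]
      by (auto simp: suminf_add[symmetric] ennreal_suminf_cmult)
  qed
  also have "F ({0} \<times> A) = ennreal (1/2) * emeasure (mu_comp (real n) \<beta>) A"
    by (simp add: F_def)
  finally show ?thesis
    unfolding mu_alt_def PM_def[symmetric] F_def[symmetric] .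
qed

section \<open>Parry measures of different slopes differ\<close>

lemma measure_Ico_Int_Ico:
  "0 \<le> u \<Longrightarrow> measure lborel ({u..<v} \<inter> {0..<t}) = max 0 (min v t - u)"
  by (cases "u \<le> min v t") (auto simp: max_def min_def)

lemma sums_geometric_tail:
  fixes r :: real
  assumes "0 < r" "r < 1"
  shows "(\<lambda>k. if k \<le> K then 0 else r ^ k) sums (r ^ (K + 1) / (1 - r))"
proof -
  have "(\<lambda>i. r ^ (K + 1) * r ^ i) sums (r ^ (K + 1) * (1 / (1 - r)))"
    using assms by (intro sums_mult geometric_sums) auto
  then have "(\<lambda>i. (\<lambda>k. if k \<le> K then 0 else r ^ k) (i + (K + 1))) sums (r ^ (K + 1) / (1 - r))"
    by (simp add: power_add mult_ac)
  then show ?thesis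
    by (subst (asm) sums_zero_iff_shift) auto
qed

lemma parry_mass_diff_sums:
  assumes g: "g > 1" and S: "S \<in> sets borel" "S \<subseteq> {0..<1}" and T: "T \<in> sets borel" "T \<subseteq> {0..<1}"
  shows "(\<lambda>k. (measure lborel (S \<inter> {0..<orbit_one g k}) - measure lborel (T \<inter> {0..<orbit_one g k})) / g ^ k)
    sums (parry_mass g S - parry_mass g T)"
  unfolding parry_mass_def diff_divide_distrib
  by (intro sums_diff summable_sums summable_parry_mass[OF g S] summable_parry_mass[OF g T])

text \<open>The density of \<open>parry a\<close> drops by \<open>1 / a\<close> (before normalisation) at \<open>T\<^sub>a 1\<close>.\<close>
lemma parry_mass_jump_lower:
  assumes a: "a > 1" and e: "0 < e" "e \<le> orbit_one a 1" "orbit_one a 1 + e \<le> 1"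
  shows "e / a \<le> parry_mass a {orbit_one a 1 - e..<orbit_one a 1} - parry_mass a {orbit_one a 1..<orbit_one a 1 + e}"
proof -
  define p where "p = orbit_one a 1"
  define d where "d k = (measure lborel ({p - e..<p} \<inter> {0..<orbit_one a k})
    - measure lborel ({p..<p + e} \<inter> {0..<orbit_one a k})) / a ^ k" for k
  have d_sums: "d sums (parry_mass a {p - e..<p} - parry_mass a {p..<p + e})"
    unfolding d_def using e by (intro parry_mass_diff_sums[OF a]) (auto simp: p_def)
  have "0 \<le> d k" for k
  proof -
    have "max 0 (min (p + e) (orbit_one a k) - p) \<le> max 0 (min p (orbit_one a k) - (p - e))"
      using e by (auto simp: max_def min_def)
    then show ?thesis
      unfolding d_def using e a
      by (subst measure_Ico_Int_Ico, simp add: p_def, subst measure_Ico_Int_Ico, simp add: p_def) auto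
  qed
  then have "d 1 \<le> parry_mass a {p - e..<p} - parry_mass a {p..<p + e}"
    using sum_le_suminf[OF sums_summable[OF d_sums], of "{1}"] sums_unique[OF d_sums] by simp
  moreover have "d 1 = e / a"
    using e by (simp add: d_def measure_Ico_Int_Ico p_def)
  ultimately show ?thesis
    by (simp add: p_def)
qed

text \<open>The density of \<open>parry b\<close> drops by at most \<open>\<Sum>\<^sub>k\<^sub>\<ge>\<^sub>1 b\<^sup>-\<^sup>k = 1 / (b - 1)\<close> across any point.\<close>
lemma parry_mass_jump_upper:
  assumes b: "b > 1" and e: "0 < e" "e \<le> p" "p + e \<le> 1"
  shows "parry_mass b {p - e..<p} - parry_mass b {p..<p + e} \<le> e / (b - 1)"
proof -
  define d where "d k = (measure lborel ({p - e..<p} \<inter> {0..<orbit_one b k})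
    - measure lborel ({p..<p + e} \<inter> {0..<orbit_one b k})) / b ^ k" for k
  have d_sums: "d sums (parry_mass b {p - e..<p} - parry_mass b {p..<p + e})"
    unfolding d_def using e by (intro parry_mass_diff_sums[OF b]) auto
  define h where "h k = e * (if k \<le> 0 then 0 else (1 / b) ^ k)" for k
  have "h sums (e * ((1 / b) ^ (0 + 1) / (1 - 1 / b)))"
    unfolding h_def using b by (intro sums_mult sums_geometric_tail) auto
  moreover have "e * ((1 / b) ^ (0 + 1) / (1 - 1 / b)) = e / (b - 1)"
    using b by (simp add: field_simps)
  ultimately have h_sums: "h sums (e / (b - 1))"
    by (simp only:)
  have "d k \<le> h k" for k
  proof (cases "k = 0")
    case True
    then show ?thesis
      using e by (simp add: d_def h_def measure_Ico_Int_Ico)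
  next
    case False
    have "max 0 (min p (orbit_one b k) - (p - e)) - max 0 (min (p + e) (orbit_one b k) - p) \<le> e"
      using e by (auto simp: max_def min_def)
    then have "d k \<le> e / b ^ k"
      unfolding d_def using e b
      by (subst measure_Ico_Int_Ico, simp, subst measure_Ico_Int_Ico, simp) (auto intro!: divide_right_mono)
    then show ?thesis
      using False by (simp add: h_def power_divide)
  qed
  then show ?thesis
    using sums_le[OF _ d_sums h_sums] by simp
qed

lemma orbit_one_gap:
  obtains \<eta> where "0 < \<eta>" "\<eta> \<le> 1" "\<And>k. 1 \<le> k \<Longrightarrow> k \<le> K \<Longrightarrow> orbit_one a k \<le> 1 - \<eta>"
proof
  let ?\<eta> = "Min (insert 1 ((\<lambda>k. 1 - orbit_one a k) ` {1..K}))"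
  have "orbit_one a k < 1" if "1 \<le> k" for k
    using that orbit_one_Suc_less_1[of a "k - 1"] by simp
  then show "0 < ?\<eta>"
    by (auto simp: Min_gr_iff)
  show "?\<eta> \<le> 1"
    by (intro Min_le) auto
  have "?\<eta> \<le> 1 - orbit_one a k" if "1 \<le> k" "k \<le> K" for k
    using that by (intro Min_le) auto
  then show "orbit_one a k \<le> 1 - ?\<eta>" if "1 \<le> k" "k \<le> K" for k
    using that by fastforce
qed

text \<open>On \<open>[1 - \<eta>, 1)\<close>, with \<open>\<eta>\<close> smaller than the gaps \<open>1 - T\<^sub>a\<^sup>k 1\<close> for \<open>1 \<le> k \<le> K\<close>, only
  the term \<open>k = 0\<close> and the tail \<open>k > K\<close> of the series defining the density contribute.\<close>
lemma parry_mass_near_1_le: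
  assumes a: "a > 1" and \<eta>: "0 < \<eta>" "\<eta> \<le> 1"
    and gap: "\<And>k. 1 \<le> k \<Longrightarrow> k \<le> K \<Longrightarrow> orbit_one a k \<le> 1 - \<eta>"
  shows "parry_mass a {1 - \<eta>..<1} \<le> \<eta> + \<eta> * ((1 / a) ^ (K + 1) / (1 - 1 / a))"
proof -
  define f where "f k = measure lborel ({1 - \<eta>..<1} \<inter> {0..<orbit_one a k}) / a ^ k" for k
  define h where "h k = (if k = 0 then \<eta> else 0) + \<eta> * (if k \<le> K then 0 else (1 / a) ^ k)" for k
  have h_sums: "h sums (\<eta> + \<eta> * ((1 / a) ^ (K + 1) / (1 - 1 / a)))"
    unfolding h_def using a by (intro sums_add sums_mult sums_geometric_tail) (auto intro: sums_single)
  have "f k \<le> h k" for k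
  proof -
    consider "k = 0" | "1 \<le> k" "k \<le> K" | "K < k"
      by linarith
    then show ?thesis
    proof cases
      case 1
      then show ?thesis
        using \<eta> by (simp add: f_def h_def measure_Ico_Int_Ico)
    next
      case 2
      then show ?thesis
        using \<eta> gap[OF 2] by (simp add: f_def h_def measure_Ico_Int_Ico max_def min_def)
    next
      case 3
      have "max 0 (min 1 (orbit_one a k) - (1 - \<eta>)) \<le> \<eta>"
        using \<eta> by (auto simp: max_def min_def)
      then have "f k \<le> \<eta> / a ^ k"
        unfolding f_def using \<eta> a by (subst measure_Ico_Int_Ico) (auto intro!: divide_right_mono)
      then show ?thesis
        using 3 by (simp add: h_def power_divide)
    qed
  qed
  moreover have "summable f"
    unfolding f_def using \<eta> by (intro summable_parry_mass[OF a]) auto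
  ultimately show ?thesis
    unfolding parry_mass_def f_def[symmetric] using h_sums by (intro sums_le[OF _ summable_sums]) auto
qed

lemma parry_mass_near_1:
  assumes a: "a > 1" and \<delta>: "\<delta> > 0"
  obtains \<eta> where "0 < \<eta>" "\<eta> \<le> 1" "parry_mass a {1 - \<eta>..<1} \<le> \<eta> * (1 + \<delta>)"
proof -
  define r where "r = 1 / a"
  have r: "0 < r" "r < 1"
    using a by (auto simp: r_def)
  obtain K where K: "r ^ K < \<delta> * (1 - r)"
    using real_arch_pow_inv[of "\<delta> * (1 - r)" r] r \<delta> by auto
  obtain \<eta> where \<eta>: "0 < \<eta>" "\<eta> \<le> 1" and gap: "\<And>k. 1 \<le> k \<Longrightarrow> k \<le> K \<Longrightarrow> orbit_one a k \<le> 1 - \<eta>"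
    using orbit_one_gap by blast
  have "parry_mass a {1 - \<eta>..<1} \<le> \<eta> + \<eta> * (r ^ (K + 1) / (1 - r))"
    unfolding r_def by (rule parry_mass_near_1_le[OF a \<eta> gap])
  also have "\<dots> \<le> \<eta> * (1 + \<delta>)"
  proof -
    have "r ^ (K + 1) \<le> r ^ K"
      using r by (simp add: power_decreasing)
    then have "r ^ (K + 1) \<le> \<delta> * (1 - r)"
      using K by linarith
    then have "r ^ (K + 1) / (1 - r) \<le> \<delta>"
      using r by (simp add: pos_divide_le_eq)
    then have "\<eta> * (r ^ (K + 1) / (1 - r)) \<le> \<eta> * \<delta>"
      using \<eta> by (intro mult_left_mono) auto
    then show ?thesis
      by (simp only: distrib_left mult_1_right)
  qed
  finally show ?thesis
    using \<eta> that by blast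
qed

lemma parry_mass_eq_if_parry_eq:
  assumes a: "a > 1" and b: "b > 1" and eq: "parry a = parry b" and A: "A \<in> sets borel" "A \<subseteq> {0..<1}"
  shows "parry_mass a A / parry_const a = parry_mass b A / parry_const b"
proof -
  have "A \<in> sets unit_borel"
    using A by (simp add: sets_unit_borel)
  then have "ennreal (parry_mass a A / parry_const a) = ennreal (parry_mass b A / parry_const b)"
    using emeasure_parry[OF a] emeasure_parry[OF b] eq by metis
  moreover have "0 \<le> parry_mass a A / parry_const a" "0 \<le> parry_mass b A / parry_const b"
    using parry_mass_nonneg[OF a A] parry_mass_nonneg[OF b A] parry_const_ge_1[OF a] parry_const_ge_1[OF b]
    by simp_all
  ultimately show ?thesis
    by simp
qed

lemma parry_const_jump_bound:
  assumes a: "a > 1" and b: "b > 1" and eq: "parry a = parry b" and a_not_int: "a \<notin> \<int>"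
  shows "(b - 1) * parry_const b \<le> a * parry_const a"
proof -
  define p where "p = orbit_one a 1"
  have "p = frac a"
    by (simp add: p_def orbit_one_Suc[of a 0, simplified] Tmap_eq_frac)
  then have p: "0 < p" "p < 1"
    using a_not_int by (simp_all add: frac_lt_1)
  define e where "e = min p (1 - p)"
  have e: "0 < e" "e \<le> p" "p + e \<le> 1"
    using p by (auto simp: e_def)
  have Z: "parry_const a \<ge> 1" "parry_const b \<ge> 1"
    using parry_const_ge_1 a b by auto
  have "e / a \<le> parry_mass a {p - e..<p} - parry_mass a {p..<p + e}"
    using parry_mass_jump_lower[OF a e[unfolded p_def]] by (simp add: p_def)
  then have "e / a / parry_const a \<le> (parry_mass a {p - e..<p} - parry_mass a {p..<p + e}) / parry_const a"
    using Z by (intro divide_right_mono) auto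
  also have "\<dots> = (parry_mass b {p - e..<p} - parry_mass b {p..<p + e}) / parry_const b"
    using parry_mass_eq_if_parry_eq[OF a b eq, of "{p - e..<p}"] parry_mass_eq_if_parry_eq[OF a b eq, of "{p..<p + e}"] e
    by (simp add: diff_divide_distrib)
  also have "\<dots> \<le> e / (b - 1) / parry_const b"
    using parry_mass_jump_upper[OF b e] Z by (intro divide_right_mono) auto
  finally have "e * ((b - 1) * parry_const b) \<le> e * (a * parry_const a)"
    using e a b Z by (simp add: field_simps)
  then show ?thesis
    using e by simp
qed

lemma parry_const_le_if_parry_eq:
  assumes a: "a > 1" and b: "b > 1" and eq: "parry a = parry b"
  shows "parry_const a \<le> parry_const b"
proof (rule field_le_epsilon)
  fix \<epsilon> :: real assume "0 < \<epsilon>"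
  have Z: "parry_const a \<ge> 1" "parry_const b \<ge> 1"
    using parry_const_ge_1 a b by auto
  obtain \<eta> where \<eta>: "0 < \<eta>" "\<eta> \<le> 1" "parry_mass a {1 - \<eta>..<1} \<le> \<eta> * (1 + \<epsilon> / parry_const b)"
    using parry_mass_near_1[OF a, of "\<epsilon> / parry_const b"] \<open>0 < \<epsilon>\<close> Z by auto
  have "\<eta> / parry_const b \<le> parry_mass b {1 - \<eta>..<1} / parry_const b"
    using measure_le_parry_mass[OF b, of "{1 - \<eta>..<1}"] \<eta> Z by (simp add: divide_right_mono)
  also have "\<dots> = parry_mass a {1 - \<eta>..<1} / parry_const a"
    using parry_mass_eq_if_parry_eq[OF a b eq, of "{1 - \<eta>..<1}"] \<eta> by simp
  also have "\<dots> \<le> \<eta> * (1 + \<epsilon> / parry_const b) / parry_const a"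
    using \<eta> Z by (simp add: divide_right_mono)
  finally have "\<eta> * parry_const a \<le> \<eta> * (parry_const b + \<epsilon>)"
    using \<eta> Z by (simp add: field_simps)
  then show "parry_const a \<le> parry_const b + \<epsilon>"
    using \<eta> by simp
qed

lemma parry_neq:
  assumes a: "a > 1" and ab: "a + 1 < b" and a_not_int: "a \<notin> \<int>"
  shows "parry a \<noteq> parry b"
proof
  assume eq: "parry a = parry b"
  have b: "b > 1"
    using a ab by simp
  have "(b - 1) * parry_const b \<le> a * parry_const a"
    by (rule parry_const_jump_bound[OF a b eq a_not_int])
  also have "\<dots> \<le> a * parry_const b"
    using a parry_const_le_if_parry_eq[OF a b eq] by simp
  finally show False
    using ab parry_const_ge_1[OF b] by simp
qed

lemma emeasure_mu_alt_Times_0_parry: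
  assumes "\<beta> > 1" "n \<ge> 1" "A \<in> sets unit_borel"
  shows "emeasure (mu_alt \<beta> n) ({0} \<times> A) = ennreal (1/2) * emeasure (parry (real n * \<beta>)) A"
proof -
  have "\<beta> \<le> real n * \<beta>"
    using assms by simp
  then have "real n * \<beta> > 1"
    using assms by linarith
  then show ?thesis
    using assms emeasure_mu_alt_Times_0[of n \<beta> A]
    by (simp add: mu_comp_nat_left sets_parry sets_mu_comp_nat_right)
qed

lemma parry_eq_if_mu_alt_eq:
  assumes "\<beta> > 1" "n \<ge> 1" "m \<ge> 1" and "mu_alt \<beta> n = mu_alt \<beta> m"
  shows "parry (real n * \<beta>) = parry (real m * \<beta>)"
proof (rule measure_eqI)
  fix A assume "A \<in> sets (parry (real n * \<beta>))"
  then have "A \<in> sets unit_borel"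
    by (simp add: sets_parry)
  then show "emeasure (parry (real n * \<beta>)) A = emeasure (parry (real m * \<beta>)) A"
    using emeasure_mu_alt_Times_0_parry[of \<beta> n A] emeasure_mu_alt_Times_0_parry[of \<beta> m A] assms
    by (simp add: ennreal_mult_cancel_left)
qed (simp add: sets_parry)

lemma parry_nat_mult_neq:
  assumes "\<beta> > 1" and "\<beta> \<notin> \<rat>" and "k \<ge> 1" and "k < l"
  shows "parry (real k * \<beta>) \<noteq> parry (real l * \<beta>)"
proof (rule parry_neq)
  have "1 * \<beta> \<le> real k * \<beta>"
    using assms by (intro mult_right_mono) auto
  then show "real k * \<beta> > 1"
    using assms by linarith
  have "1 * \<beta> \<le> (real l - real k) * \<beta>"
    using assms by (intro mult_right_mono) auto
  then show "real k * \<beta> + 1 < real l * \<beta>"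
    using assms by (simp add: algebra_simps)
  show "real k * \<beta> \<notin> \<int>"
  proof
    assume "real k * \<beta> \<in> \<int>"
    then have "real k * \<beta> / real k \<in> \<rat>"
      using Ints_subset_Rats Rats_divide Rats_of_nat by blast
    with assms show False
      by simp
  qed
qed

theorem mainTheorem7:
  fixes \<beta> :: real and n m :: nat
  assumes "\<beta> > 1" and "\<beta> \<notin> \<rat>"
    and "n \<ge> 2" and "m \<ge> 2" and "n \<noteq> m"
  shows "mu_alt \<beta> n \<noteq> mu_alt \<beta> m"
proof
  assume "mu_alt \<beta> n = mu_alt \<beta> m"
  then have eq: "parry (real n * \<beta>) = parry (real m * \<beta>)"
    using assms by (intro parry_eq_if_mu_alt_eq) auto
  consider "n < m" | "m < n"
    using \<open>n \<noteq> m\<close> by linarith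
  then show False
  proof cases
    case 1
    with eq show False
      using parry_nat_mult_neq[of \<beta> n m] assms by simp
  next
    case 2
    with eq show False
      using parry_nat_mult_neq[of \<beta> m n] assms by simp
  qed
qed

end
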